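(* Let $\ell_v$ be a vertical line and $\ell_h$ a horizontal line, and let $\mathcal L$ be a finite family of L-frames, all of the same type, each of which intersects both $\ell_v$ and $\ell_h$. Then the intersection graph of $\mathcal L$ is a permutation graph; more precisely, taking the order in which the L-frames cross $\ell_v$ and the order in which they cross $\ell_h$ gives two orderings of $\mathcal L$ such that two L-frames intersect iff they appear in different relative order in the two orderings.
   Context: An L-frame is the union of a closed horizontal segment and a closed vertical segment sharing an endpoint (the corner); its type is determined by which directions (left/right, up/down) the two segments extend from the corner. A graph is a permutation graph if its vertices can be placed on two parallel lines so that, joining each vertex's two copies by a segment, two vertices are adjacent iff their segments cross (equivalently, iff they appear in different relative order on the two lines). Intersection graphs join two objects iff they intersect. *)

theory Defs
  imports "HOL-Analysis.Analysis"
begin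

text \<open>An L-frame is described by its corner (cx, cy), the x-coordinate hx of the
  other endpoint of its horizontal segment and the y-coordinate vy of the other
  endpoint of its vertical segment.\<close>
datatype lframe = LFrame (cx: real) (cy: real) (hx: real) (vy: real)

definition is_lframe :: "lframe \<Rightarrow> bool" where
  "is_lframe L \<longleftrightarrow> hx L \<noteq> cx L \<and> vy L \<noteq> cy L"

definition lpts :: "lframe \<Rightarrow> (real \<times> real) set" where
  "lpts L = closed_segment (cx L, cy L) (hx L, cy L) \<union> closed_segment (cx L, cy L) (cx L, vy L)"

definition ltype :: "lframe \<Rightarrow> real \<times> real" where
  "ltype L = (sgn (hx L - cx L), sgn (vy L - cy L))"

definition vline :: "real \<Rightarrow> (real \<times> real) set" where
  "vline a = {p. fst p = a}"

definition hline :: "real \<Rightarrow> (real \<times> real) set" where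
  "hline b = {p. snd p = b}"

definition crosses_before_v :: "real \<Rightarrow> real \<Rightarrow> lframe \<Rightarrow> lframe \<Rightarrow> bool" where
  "crosses_before_v a s A B \<longleftrightarrow>
     (\<forall>p\<in>lpts A \<inter> vline a. \<forall>q\<in>lpts B \<inter> vline a. s * snd p < s * snd q)"

definition crosses_before_h :: "real \<Rightarrow> real \<Rightarrow> lframe \<Rightarrow> lframe \<Rightarrow> bool" where
  "crosses_before_h b s A B \<longleftrightarrow>
     (\<forall>p\<in>lpts A \<inter> hline b. \<forall>q\<in>lpts B \<inter> hline b. s * fst p < s * fst q)"

end

theory Submission
  imports Defs "HOL-Library.List_Lexorder"
begin

text \<open>Flip the axes so that all frames open rightwards and upwards, i.e. replace
  (x, y) by (s x, t y) where (s, t) is the common type.  A frame meeting the line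
  x = a contains the point (a, cy) of its horizontal arm and crosses the line there;
  likewise it crosses y = b at (cx, b).  Hence two frames intersect unless one corner
  strictly dominates the other in both normalised coordinates, and otherwise the
  horizontal arm of the lower frame and the vertical arm of the left one meet.
  Sorting by the corner height (the crossing order on x = a) and by the corner
  abscissa (the crossing order on y = b) therefore gives the required orders, provided
  ties are broken consistently: by the other coordinate in reverse and then by an
  arbitrary enumeration, taken in opposite directions in the two orders.\<close>

lemma Pair_mem_closed_segment_same_snd:
  fixes x x1 x2 :: "'a::real_vector" and y y0 :: "'b::real_vector"
  shows "(x, y) \<in> closed_segment (x1, y0) (x2, y0) \<longleftrightarrow> y = y0 \<and> x \<in> closed_segment x1 x2"
  unfolding closed_segment_def by (auto simp: scaleR_prod_def algebra_simps)

lemma Pair_mem_closed_segment_same_fst: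
  fixes x x0 :: "'a::real_vector" and y y1 y2 :: "'b::real_vector"
  shows "(x, y) \<in> closed_segment (x0, y1) (x0, y2) \<longleftrightarrow> x = x0 \<and> y \<in> closed_segment y1 y2"
  unfolding closed_segment_def by (auto simp: scaleR_prod_def algebra_simps)

lemma mem_lpts_iff:
  "(x, y) \<in> lpts L \<longleftrightarrow>
     (y = cy L \<and> x \<in> closed_segment (cx L) (hx L)) \<or> (x = cx L \<and> y \<in> closed_segment (cy L) (vy L))"
  by (auto simp: lpts_def Pair_mem_closed_segment_same_snd Pair_mem_closed_segment_same_fst)

lemma mem_lpts_oriented_iff:
  assumes "s \<in> {1, -1}" "t \<in> {1, -1}"
    and "sgn (hx L - cx L) = s" "sgn (vy L - cy L) = t"
  shows "(x, y) \<in> lpts L \<longleftrightarrow>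
           (y = cy L \<and> s * cx L \<le> s * x \<and> s * x \<le> s * hx L) \<or>
           (x = cx L \<and> t * cy L \<le> t * y \<and> t * y \<le> t * vy L)"
  using assms by (auto simp: mem_lpts_iff closed_segment_eq_real_ivl sgn_if split: if_splits)

lemma sgn_diff_imp_mult_less:
  fixes u v s :: real
  assumes "s \<in> {1, -1}" "sgn (v - u) = s"
  shows "s * u < s * v"
  using assms by (auto simp: sgn_if split: if_splits)

lemma lpts_meets_vline_imp_mem:
  assumes "lpts L \<inter> vline a \<noteq> {}"
  shows "(a, cy L) \<in> lpts L"
proof -
  obtain p where "p \<in> lpts L" "fst p = a" using assms by (auto simp: vline_def)
  then have "(a, snd p) \<in> lpts L" by (cases p) simp
  then show ?thesis unfolding mem_lpts_iff by auto
qed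

lemma lpts_meets_hline_imp_mem:
  assumes "lpts L \<inter> hline b \<noteq> {}"
  shows "(cx L, b) \<in> lpts L"
proof -
  obtain p where "p \<in> lpts L" "snd p = b" using assms by (auto simp: hline_def)
  then have "(fst p, b) \<in> lpts L" by (cases p) simp
  then show ?thesis unfolding mem_lpts_iff by auto
qed

lemma crosses_before_v_imp_less:
  assumes "crosses_before_v a t A B" "(a, cy A) \<in> lpts A" "(a, cy B) \<in> lpts B"
  shows "t * cy A < t * cy B"
proof -
  have "(a, cy A) \<in> lpts A \<inter> vline a" "(a, cy B) \<in> lpts B \<inter> vline a"
    using assms(2,3) by (auto simp: vline_def)
  with assms(1) have "t * snd (a, cy A) < t * snd (a, cy B)"
    unfolding crosses_before_v_def by blast
  then show ?thesis by simp
qed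

lemma crosses_before_h_imp_less:
  assumes "crosses_before_h b s A B" "(cx A, b) \<in> lpts A" "(cx B, b) \<in> lpts B"
  shows "s * cx A < s * cx B"
proof -
  have "(cx A, b) \<in> lpts A \<inter> hline b" "(cx B, b) \<in> lpts B \<inter> hline b"
    using assms(2,3) by (auto simp: hline_def)
  with assms(1) have "s * fst (cx A, b) < s * fst (cx B, b)"
    unfolding crosses_before_h_def by blast
  then show ?thesis by simp
qed

lemma lpts_crossing_bounds:
  assumes st: "s \<in> {1, -1}" "t \<in> {1, -1}"
    and type: "sgn (hx L - cx L) = s" "sgn (vy L - cy L) = t"
    and "(a, cy L) \<in> lpts L" "(cx L, b) \<in> lpts L"
  shows "s * cx L \<le> s * a" "s * a \<le> s * hx L" "t * cy L \<le> t * b" "t * b \<le> t * vy L"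
  using assms(5,6) sgn_diff_imp_mult_less[OF st(1) type(1)] sgn_diff_imp_mult_less[OF st(2) type(2)]
  unfolding mem_lpts_oriented_iff[OF st type] by auto

lemma lpts_intersect_iff_corners_incomparable:
  assumes st: "s \<in> {1, -1}" "t \<in> {1, -1}"
    and typeA: "sgn (hx A - cx A) = s" "sgn (vy A - cy A) = t"
    and typeB: "sgn (hx B - cx B) = s" "sgn (vy B - cy B) = t"
    and crossA: "(a, cy A) \<in> lpts A" "(cx A, b) \<in> lpts A"
    and crossB: "(a, cy B) \<in> lpts B" "(cx B, b) \<in> lpts B"
  shows "lpts A \<inter> lpts B \<noteq> {} \<longleftrightarrow>
           \<not> ((s * cx A < s * cx B \<and> t * cy A < t * cy B) \<or> (s * cx B < s * cx A \<and> t * cy B < t * cy A))"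
    (is "_ \<longleftrightarrow> \<not> ?dominated")
proof -
  note memA = mem_lpts_oriented_iff[OF st typeA]
   and memB = mem_lpts_oriented_iff[OF st typeB]
   and boundsA = lpts_crossing_bounds[OF st typeA crossA]
   and boundsB = lpts_crossing_bounds[OF st typeB crossB]
  show ?thesis
  proof
    assume "lpts A \<inter> lpts B \<noteq> {}"
    then obtain x y where "(x, y) \<in> lpts A" "(x, y) \<in> lpts B" by auto
    then show "\<not> ?dominated" using boundsA boundsB st unfolding memA memB by auto
  next
    assume "\<not> ?dominated"
    then consider "cy A = cy B" | "cx A = cx B"
      | "s * cx A < s * cx B" "t * cy B < t * cy A" | "s * cx B < s * cx A" "t * cy A < t * cy B"
      using st by fastforce
    then have "(a, cy A) \<in> lpts A \<inter> lpts B \<or> (cx A, b) \<in> lpts A \<inter> lpts B \<or>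
               (cx B, cy A) \<in> lpts A \<inter> lpts B \<or> (cx A, cy B) \<in> lpts A \<inter> lpts B"
      by cases (use crossA crossB boundsA boundsB in \<open>auto simp: memA memB\<close>)
    then show "lpts A \<inter> lpts B \<noteq> {}" by blast
  qed
qed

definition rank_on :: "'a set \<Rightarrow> ('a \<Rightarrow> 'b::linorder) \<Rightarrow> 'a \<Rightarrow> nat" where
  "rank_on F f x = card {z \<in> F. f z < f x}"

lemma rank_on_less_iff:
  assumes "finite F" "x \<in> F" "y \<in> F"
  shows "rank_on F f x < rank_on F f y \<longleftrightarrow> f x < f y"
  unfolding rank_on_def
proof
  assume "f x < f y"
  then have "{z \<in> F. f z < f x} \<subset> {z \<in> F. f z < f y}" using assms(2) by auto
  then show "card {z \<in> F. f z < f x} < card {z \<in> F. f z < f y}"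
    using assms(1) by (auto intro: psubset_card_mono)
next
  assume less: "card {z \<in> F. f z < f x} < card {z \<in> F. f z < f y}"
  show "f x < f y"
  proof (rule ccontr)
    assume "\<not> f x < f y"
    then have "{z \<in> F. f z < f y} \<subseteq> {z \<in> F. f z < f x}"
      by (auto simp: not_less intro: less_le_trans)
    then have "card {z \<in> F. f z < f y} \<le> card {z \<in> F. f z < f x}"
      using assms(1) by (intro card_mono) auto
    with less show False by simp
  qed
qed

lemma inj_on_rank_on:
  assumes "finite F" "inj_on f F"
  shows "inj_on (rank_on F f) F"
proof (rule inj_onI)
  fix x y assume "x \<in> F" "y \<in> F" "rank_on F f x = rank_on F f y"
  then have "\<not> f x < f y" "\<not> f y < f x"
    using rank_on_less_iff[where f = f, OF assms(1) \<open>x \<in> F\<close> \<open>y \<in> F\<close>] rank_on_less_iff[where f = f, OF assms(1) \<open>y \<in> F\<close> \<open>x \<in> F\<close>]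
    by simp_all
  then have "f x = f y" by simp
  then show "x = y" using assms(2) \<open>x \<in> F\<close> \<open>y \<in> F\<close> by (simp add: inj_on_eq_iff)
qed

definition vertical_key :: "real \<Rightarrow> real \<Rightarrow> (lframe \<Rightarrow> nat) \<Rightarrow> lframe \<Rightarrow> real list" where
  "vertical_key s t i L = [t * cy L, - (s * cx L), real (i L)]"

definition horizontal_key :: "real \<Rightarrow> real \<Rightarrow> (lframe \<Rightarrow> nat) \<Rightarrow> lframe \<Rightarrow> real list" where
  "horizontal_key s t i L = [s * cx L, - (t * cy L), - real (i L)]"

lemma inj_on_keys:
  assumes "inj_on i F"
  shows "inj_on (vertical_key s t i) F" "inj_on (horizontal_key s t i) F"
  using assms by (auto simp: inj_on_def vertical_key_def horizontal_key_def)

lemma keys_disagree_iff_corners_incomparable: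
  assumes "i A \<noteq> i B"
  shows "(vertical_key s t i A < vertical_key s t i B \<longleftrightarrow> horizontal_key s t i B < horizontal_key s t i A)
         \<longleftrightarrow> \<not> ((s * cx A < s * cx B \<and> t * cy A < t * cy B) \<or> (s * cx B < s * cx A \<and> t * cy B < t * cy A))"
  using assms by (auto simp: vertical_key_def horizontal_key_def)

lemma common_ltype:
  assumes "\<forall>L\<in>F. is_lframe L" "\<forall>A\<in>F. \<forall>B\<in>F. ltype A = ltype B"
  obtains s t :: real where "s \<in> {1, -1}" "t \<in> {1, -1}"
    "\<And>L. L \<in> F \<Longrightarrow> sgn (hx L - cx L) = s" "\<And>L. L \<in> F \<Longrightarrow> sgn (vy L - cy L) = t"
proof (cases "F = {}")
  case True
  then show ?thesis by (intro that[of 1 1]) simp_all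
next
  case False
  then obtain L0 where "L0 \<in> F" by auto
  then have "hx L0 - cx L0 \<noteq> 0" "vy L0 - cy L0 \<noteq> 0" using assms(1) by (auto simp: is_lframe_def)
  then have "sgn (hx L0 - cx L0) \<in> {1, -1}" "sgn (vy L0 - cy L0) \<in> {1, -1}"
    by (simp_all add: sgn_if)
  moreover have "sgn (hx L - cx L) = sgn (hx L0 - cx L0)" "sgn (vy L - cy L) = sgn (vy L0 - cy L0)"
    if "L \<in> F" for L
  proof -
    have "ltype L = ltype L0" using assms(2) \<open>L0 \<in> F\<close> that by blast
    then show "sgn (hx L - cx L) = sgn (hx L0 - cx L0)" "sgn (vy L - cy L) = sgn (vy L0 - cy L0)"
      by (simp_all add: ltype_def)
  qed
  ultimately show ?thesis by (rule that)
qed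

theorem mainTheorem11:
  fixes F :: "lframe set" and a b :: real
  assumes "finite F"
    and "\<forall>L\<in>F. is_lframe L"
    and "\<forall>A\<in>F. \<forall>B\<in>F. ltype A = ltype B"
    and "\<forall>L\<in>F. lpts L \<inter> vline a \<noteq> {}"
    and "\<forall>L\<in>F. lpts L \<inter> hline b \<noteq> {}"
  shows "\<exists>sv sh :: real. sv \<in> {1, -1} \<and> sh \<in> {1, -1} \<and>
          (\<exists>(\<pi>v :: lframe \<Rightarrow> nat) (\<pi>h :: lframe \<Rightarrow> nat). inj_on \<pi>v F \<and> inj_on \<pi>h F \<and>
            (\<forall>A\<in>F. \<forall>B\<in>F. crosses_before_v a sv A B \<longrightarrow> \<pi>v A < \<pi>v B) \<and>
            (\<forall>A\<in>F. \<forall>B\<in>F. crosses_before_h b sh A B \<longrightarrow> \<pi>h A < \<pi>h B) \<and>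
            (\<forall>A\<in>F. \<forall>B\<in>F. A \<noteq> B \<longrightarrow>
               (lpts A \<inter> lpts B \<noteq> {} \<longleftrightarrow> (\<pi>v A < \<pi>v B \<longleftrightarrow> \<pi>h B < \<pi>h A))))"
proof -
  obtain s t where st: "s \<in> {1, -1}" "t \<in> {1, -1}"
    and type: "\<And>L. L \<in> F \<Longrightarrow> sgn (hx L - cx L) = s" "\<And>L. L \<in> F \<Longrightarrow> sgn (vy L - cy L) = t"
    using common_ltype assms(2,3) by blast
  obtain i :: "lframe \<Rightarrow> nat" where i: "inj_on i F"
    using finite_imp_inj_to_nat_seg[OF assms(1)] by blast
  have vertical: "(a, cy L) \<in> lpts L" and horizontal: "(cx L, b) \<in> lpts L" if "L \<in> F" for L
    using that assms(4,5) lpts_meets_vline_imp_mem lpts_meets_hline_imp_mem by blast+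
  define \<pi>v where "\<pi>v = rank_on F (vertical_key s t i)"
  define \<pi>h where "\<pi>h = rank_on F (horizontal_key s t i)"
  note rank_less = rank_on_less_iff[OF assms(1)]
  show ?thesis
  proof (rule exI[of _ t], rule exI[of _ s], rule conjI[OF st(2) conjI[OF st(1)]],
      rule exI[of _ \<pi>v], rule exI[of _ \<pi>h], intro conjI ballI impI)
    fix A B assume AB: "A \<in> F" "B \<in> F"
    note corners = vertical[OF AB(1)] horizontal[OF AB(1)] vertical[OF AB(2)] horizontal[OF AB(2)]
    show "\<pi>v A < \<pi>v B" if "crosses_before_v a t A B"
      using crosses_before_v_imp_less[OF that corners(1,3)] AB
      by (simp add: \<pi>v_def rank_less vertical_key_def)
    show "\<pi>h A < \<pi>h B" if "crosses_before_h b s A B"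
      using crosses_before_h_imp_less[OF that corners(2,4)] AB
      by (simp add: \<pi>h_def rank_less horizontal_key_def)
    show "lpts A \<inter> lpts B \<noteq> {} \<longleftrightarrow> (\<pi>v A < \<pi>v B \<longleftrightarrow> \<pi>h B < \<pi>h A)" if "A \<noteq> B"
    proof -
      have "i A \<noteq> i B" using that AB inj_onD[OF i] by blast
      show ?thesis
        unfolding \<pi>v_def \<pi>h_def rank_less[OF AB] rank_less[OF AB(2,1)]
          keys_disagree_iff_corners_incomparable[OF \<open>i A \<noteq> i B\<close>]
        by (rule lpts_intersect_iff_corners_incomparable[OF st type[OF AB(1)] type[OF AB(2)] corners])
    qed
  qed (use assms(1) i in \<open>simp_all add: \<pi>v_def \<pi>h_def inj_on_rank_on inj_on_keys\<close>)
qed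

end
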